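(* Let $n\geq 5$ and let $H$ be a Hamiltonian cycle in the complete graph $K_n$. Then $G=K_n-H$ (the graph on $V(K_n)$ with edge set $E(K_n)\setminus E(H)$) is $2$-swappable.
   Context: For a graph $G$, $A\subseteq E(G)$ and $B\subseteq E(\bar G)$ (edges of the complement), $G-A+B$ denotes the graph on $V(G)$ with edge set $(E(G)\setminus A)\cup B$. $G$ is $2$-swappable if for every $e\in E(G)$ there exist $A\subseteq E(G)$ and $B\subseteq E(\bar G)$ with $e\in A$, $|A|\leq 2$, and $G\cong G-A+B$. *)

theory Defs
  imports Main
begin

text \<open>Simple graphs on a vertex set V are given by an edge set E of 2-element subsets of V.\<close>

definition all_edges :: "'a set \<Rightarrow> 'a set set" where
  "all_edges V = {e. e \<subseteq> V \<and> card e = 2}"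

definition graph_iso :: "'a set \<Rightarrow> 'a set set \<Rightarrow> 'a set set \<Rightarrow> bool" where
  "graph_iso V E1 E2 \<longleftrightarrow>
     (\<exists>f. bij_betw f V V \<and> (\<forall>e \<in> all_edges V. e \<in> E1 \<longleftrightarrow> f ` e \<in> E2))"

definition two_swappable :: "'a set \<Rightarrow> 'a set set \<Rightarrow> bool" where
  "two_swappable V E \<longleftrightarrow>
     (\<forall>e \<in> E. \<exists>A B. A \<subseteq> E \<and> B \<subseteq> all_edges V - E \<and> e \<in> A \<and> card A \<le> 2
                \<and> graph_iso V E ((E - A) \<union> B))"

text \<open>A Hamiltonian cycle of K_n on vertex set V, given by a cyclic ordering xs of all vertices.\<close>
definition is_ham_cycle :: "'a set \<Rightarrow> 'a list \<Rightarrow> bool" where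
  "is_ham_cycle V xs \<longleftrightarrow> distinct xs \<and> set xs = V \<and> length xs \<ge> 3"

definition cycle_edges :: "'a list \<Rightarrow> 'a set set" where
  "cycle_edges xs = {{xs ! i, xs ! ((i + 1) mod length xs)} | i. i < length xs}"

end

theory Submission imports Defs begin

text \<open>Any two Hamiltonian cycles on the same vertex set are related by a relabelling of the
vertices, so the complements of any two Hamiltonian cycles are isomorphic. Let {a, b}
be a chord of the cycle, i.e. an edge of the complement, and write the cycle as
a, u, b, w with nonempty segments u and w. Reversing u gives the Hamiltonian cycle
a, b, rev u, w, which trades the cycle edges {a, hd u}, {b, hd w} for {a, b}, {hd u, hd w}.
Hence deleting {a, b}, {hd u, hd w} from the complement and adding {a, hd u}, {b, hd w}
yields the complement of another Hamiltonian cycle, which is isomorphic to the original.\<close>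

fun path_edges :: "'a list \<Rightarrow> 'a set set" where
  "path_edges (x # y # zs) = insert {x, y} (path_edges (y # zs))"
| "path_edges _ = {}"

lemma path_edges_append:
  "xs \<noteq> [] \<Longrightarrow> ys \<noteq> [] \<Longrightarrow>
   path_edges (xs @ ys) = path_edges xs \<union> path_edges ys \<union> {{last xs, hd ys}}"
  by (induction xs rule: path_edges.induct) (auto simp: neq_Nil_conv)

lemma path_edges_rev: "path_edges (rev xs) = path_edges xs"
proof (induction xs rule: path_edges.induct)
  case (1 x y zs)
  have "path_edges (rev (x # y # zs)) = path_edges (rev (y # zs) @ [x])" by simp
  also have "\<dots> = path_edges (rev (y # zs)) \<union> {{y, x}}"
    by (subst path_edges_append) (auto simp: last_rev)
  finally show ?case using 1 by auto
qed auto

lemma path_edges_subset: "e \<in> path_edges xs \<Longrightarrow> e \<subseteq> set xs"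
  by (induction xs rule: path_edges.induct) auto

lemma path_edges_conv_nth:
  "path_edges xs = (\<lambda>k. {xs ! k, xs ! Suc k}) ` {..<length xs - 1}"
proof (induction xs rule: path_edges.induct)
  case (1 x y zs)
  have "{..<length (x # y # zs) - 1} = insert 0 (Suc ` {..<length (y # zs) - 1})"
    by (simp add: lessThan_Suc_eq_insert_0)
  then show ?case using 1 by (simp add: image_image)
qed auto

lemma cycle_edges_eq_image:
  "cycle_edges xs = (\<lambda>i. {xs ! i, xs ! (Suc i mod length xs)}) ` {..<length xs}"
  unfolding cycle_edges_def by auto

lemma cycle_edges_conv_path_edges:
  assumes "xs \<noteq> []"
  shows "cycle_edges xs = insert {last xs, hd xs} (path_edges xs)"
proof -
  have "{..<length xs} = insert (length xs - 1) {..<length xs - 1}"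
    using assms by auto
  then show ?thesis
    using assms by (auto simp: cycle_edges_eq_image path_edges_conv_nth last_conv_nth hd_conv_nth)
qed

lemma cycle_edges_rotate1: "cycle_edges (rotate1 xs) = cycle_edges xs"
proof (cases "length xs \<ge> 2")
  case False
  then have "rotate1 xs = xs" by (cases xs) (auto simp: not_le)
  then show ?thesis by simp
next
  case True
  then obtain x t where xs: "xs = x # t" and "t \<noteq> []"
    by (cases xs) (auto simp: Suc_le_length_iff)
  have "cycle_edges (t @ [x]) = insert {x, hd t} (path_edges t \<union> {{last t, x}})"
    using \<open>t \<noteq> []\<close> by (simp add: cycle_edges_conv_path_edges path_edges_append)
  moreover have "cycle_edges (x # t) = insert {last t, x} (path_edges t \<union> {{x, hd t}})"
    using \<open>t \<noteq> []\<close> path_edges_append[of "[x]" t] by (simp add: cycle_edges_conv_path_edges)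
  ultimately show ?thesis using xs by auto
qed

lemma cycle_edges_rotate: "cycle_edges (rotate k xs) = cycle_edges xs"
  by (induction k) (simp_all add: cycle_edges_rotate1)

lemma cycle_edges_subset_Pow: "cycle_edges xs \<subseteq> Pow (set xs)"
  unfolding cycle_edges_def by (auto intro!: nth_mem mod_less_divisor)

lemma cycle_edges_map: "cycle_edges (map f xs) = (`) f ` cycle_edges xs"
proof -
  have "Suc i mod length xs < length xs" if "i < length xs" for i
    using that by (intro mod_less_divisor) auto
  then show ?thesis by (simp add: cycle_edges_eq_image image_image)
qed

lemma graph_iso_complement_image:
  assumes f: "bij_betw f V V" and C: "C \<subseteq> Pow V"
  shows "graph_iso V (all_edges V - C) (all_edges V - (`) f ` C)"
  unfolding graph_iso_def
proof (intro exI conjI ballI)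
  fix e assume e: "e \<in> all_edges V"
  then have eV: "e \<subseteq> V" and "card e = 2" by (auto simp: all_edges_def)
  have inj: "inj_on f V" and img: "f ` V = V" using f by (auto simp: bij_betw_def)
  then have "f ` e \<in> all_edges V"
    using eV \<open>card e = 2\<close> by (auto simp: all_edges_def card_image inj_on_subset)
  moreover have "e \<in> C \<longleftrightarrow> f ` e \<in> (`) f ` C"
    using inj_on_image_mem_iff[OF inj_on_image_Pow[OF inj]] eV C by auto
  ultimately show "e \<in> all_edges V - C \<longleftrightarrow> f ` e \<in> all_edges V - (`) f ` C"
    using e by auto
qed (rule f)

lemma ex_bij_betw_map_eq:
  assumes "distinct xs" "distinct ys" "set xs = set ys"
  obtains f where "bij_betw f (set xs) (set ys)" "map f xs = ys"
proof
  have len: "length xs = length ys" using assms distinct_card by metis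
  have xs: "bij_betw ((!) xs) {..<length xs} (set xs)" and ys: "bij_betw ((!) ys) {..<length xs} (set ys)"
    using assms len by (auto intro: bij_betw_nth)
  define f where "f = (!) ys \<circ> the_inv_into {..<length xs} ((!) xs)"
  show "bij_betw f (set xs) (set ys)"
    unfolding f_def using bij_betw_the_inv_into[OF xs] ys by (rule bij_betw_trans)
  show "map f xs = ys"
    using len bij_betw_imp_inj_on[OF xs] by (intro nth_equalityI) (auto simp: f_def the_inv_into_f_f)
qed

lemma graph_iso_complement_cycles:
  assumes "distinct xs" "distinct ys" "set xs = V" "set ys = V"
  shows "graph_iso V (all_edges V - cycle_edges xs) (all_edges V - cycle_edges ys)"
proof -
  obtain f where "bij_betw f V V" "map f xs = ys"
    using ex_bij_betw_map_eq assms by metis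
  then show ?thesis
    using graph_iso_complement_image cycle_edges_subset_Pow assms(3) cycle_edges_map by metis
qed

lemma cycle_edges_split:
  assumes "u \<noteq> []" "w \<noteq> []"
  shows "cycle_edges (a # u @ b # w) =
           {{last w, a}, {a, hd u}, {last u, b}, {b, hd w}} \<union> path_edges u \<union> path_edges w"
proof -
  have "path_edges ([a] @ u @ [b] @ w) =
          {{a, hd u}, {last u, b}, {b, hd w}} \<union> path_edges u \<union> path_edges w"
    using assms by (simp add: path_edges_append del: append.simps)
  then show ?thesis using assms by (simp add: cycle_edges_conv_path_edges)
qed

lemma cycle_edges_split_reversed:
  assumes "u \<noteq> []" "w \<noteq> []"
  shows "cycle_edges (a # b # rev u @ w) =
           {{last w, a}, {a, b}, {last u, b}, {hd u, hd w}} \<union> path_edges u \<union> path_edges w"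
proof -
  have "path_edges ([a] @ [b] @ rev u @ w) =
          {{a, b}, {last u, b}, {hd u, hd w}} \<union> path_edges u \<union> path_edges w"
    using assms by (simp add: path_edges_append path_edges_rev hd_rev last_rev
                        del: append.simps) blast
  then show ?thesis using assms by (simp add: cycle_edges_conv_path_edges)
qed

lemma doubleton_in_all_edges: "x \<noteq> y \<Longrightarrow> x \<in> V \<Longrightarrow> y \<in> V \<Longrightarrow> {x, y} \<in> all_edges V"
  by (simp add: all_edges_def)

lemma two_swap_chord:
  assumes d: "distinct (a # u @ b # w)" and u: "u \<noteq> []" and w: "w \<noteq> []"
    and V: "V = set (a # u @ b # w)" and E: "E = all_edges V - cycle_edges (a # u @ b # w)"
  defines "A \<equiv> {{a, b}, {hd u, hd w}}" and "B \<equiv> {{a, hd u}, {b, hd w}}"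
  shows "A \<subseteq> E" "B \<subseteq> all_edges V - E" "graph_iso V E (E - A \<union> B)"
proof -
  let ?xs = "a # u @ b # w" and ?ys = "a # b # rev u @ w"
  let ?X = "{{last w, a}, {last u, b}} \<union> path_edges u \<union> path_edges w"
  have xs: "cycle_edges ?xs = B \<union> ?X"
    unfolding cycle_edges_split[OF u w] B_def by auto
  have ys: "cycle_edges ?ys = A \<union> ?X"
    unfolding cycle_edges_split_reversed[OF u w] A_def by auto
  have inside: "e \<subseteq> set u \<or> e \<subseteq> set w" if "e \<in> path_edges u \<union> path_edges w" for e
    using that path_edges_subset by blast
  have ends: "hd u \<in> set u" "last u \<in> set u" "hd w \<in> set w" "last w \<in> set w"
    using u w by auto
  have disjoint: "A \<inter> B = {}" "A \<inter> ?X = {}" "B \<inter> ?X = {}"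
    using d ends inside unfolding A_def B_def by (auto simp: doubleton_eq_iff)
  have edges: "A \<subseteq> all_edges V" "B \<subseteq> all_edges V"
    using d ends V unfolding A_def B_def by (auto intro!: doubleton_in_all_edges)
  show "A \<subseteq> E" "B \<subseteq> all_edges V - E"
    unfolding E xs using disjoint edges by blast+
  have "E - A \<union> B = all_edges V - cycle_edges ?ys"
    unfolding E xs ys using disjoint edges by blast
  moreover have "graph_iso V E (all_edges V - cycle_edges ?ys)"
    unfolding E using d V by (intro graph_iso_complement_cycles) auto
  ultimately show "graph_iso V E (E - A \<union> B)" by simp
qed

lemma cycle_rotate_split:
  assumes "distinct xs" "a \<in> set xs" "b \<in> set xs" "a \<noteq> b"
  obtains u w where "distinct (a # u @ b # w)" "set (a # u @ b # w) = set xs"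
    "cycle_edges (a # u @ b # w) = cycle_edges xs"
proof -
  obtain p q where xs: "xs = p @ a # q" using assms(2) split_list by metis
  then have rot: "rotate (length p) xs = a # q @ p" by (simp add: rotate_append)
  moreover have "b \<in> set (q @ p)" using assms xs by auto
  then obtain u w where "q @ p = u @ b # w" using split_list by metis
  ultimately show ?thesis
    using that assms(1) distinct_rotate set_rotate cycle_edges_rotate by metis
qed

lemma two_swappable_complement_cycle:
  assumes "distinct xs"
  shows "two_swappable (set xs) (all_edges (set xs) - cycle_edges xs)"
  unfolding two_swappable_def
proof
  let ?V = "set xs" and ?E = "all_edges (set xs) - cycle_edges xs"
  fix e assume e: "e \<in> ?E"
  then obtain a b where ab: "e = {a, b}" "a \<noteq> b" "a \<in> ?V" "b \<in> ?V"
    by (auto simp: all_edges_def card_2_iff)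
  then obtain u w where d: "distinct (a # u @ b # w)" and V: "?V = set (a # u @ b # w)"
    and C: "cycle_edges xs = cycle_edges (a # u @ b # w)"
    using cycle_rotate_split assms by metis
  have chord: "{a, b} \<notin> cycle_edges (a # u @ b # w)" using e ab C by simp
  have u: "u \<noteq> []"
  proof
    assume "u = []"
    then have "{a, b} \<in> cycle_edges (a # u @ b # w)" by (simp add: cycle_edges_conv_path_edges)
    with chord show False ..
  qed
  have w: "w \<noteq> []"
  proof
    assume "w = []"
    then have "{a, b} \<in> cycle_edges (a # u @ b # w)"
      by (simp add: cycle_edges_conv_path_edges insert_commute)
    with chord show False ..
  qed
  note swap = two_swap_chord[OF d u w V refl, folded C]
  show "\<exists>A B. A \<subseteq> ?E \<and> B \<subseteq> all_edges ?V - ?E \<and> e \<in> A \<and> card A \<le> 2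
              \<and> graph_iso ?V ?E (?E - A \<union> B)"
    using swap by (intro exI[of _ "{{a, b}, {hd u, hd w}}"] exI[of _ "{{a, hd u}, {b, hd w}}"])
      (simp add: ab card_insert_if)
qed

theorem mainTheorem4:
  fixes n :: nat and xs :: "nat list"
  assumes "n \<ge> 5"
    and "is_ham_cycle {0..<n} xs"
  shows "two_swappable {0..<n} (all_edges {0..<n} - cycle_edges xs)"
  using two_swappable_complement_cycle[of xs] assms(2) by (simp add: is_ham_cycle_def)

end
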